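(* Let $n=2^uv$ with $v$ odd and $u\ge 0$. Suppose $(\varepsilon,\beta,\gamma;(12))\in\mathrm{Par}(n)$, where every cycle of $\beta$ has length divisible by $2^u$. Then: <ul> <li>(i) the number of cycles of odd length of $\beta$ is at least the number of cycles of odd length of $\gamma$;</li> <li>(ii) if $u\ge1$, then $\gamma$ has no cycles of odd length.</li> </ul> Fixed points count as cycles of length $1$.
   Context: A Latin square of order $n$ is an $n\times n$ array with rows, columns and symbols indexed by $[n]$, each symbol occurring once in each row and each column, with triple set $O(L)$. Permutations act on the right; $\varepsilon$ is the identity. A paratopism $(\alpha,\beta,\gamma;(12))$ maps $L$ to $L^\sigma$ with triple set $\{(y\beta,x\alpha,z\gamma):(x,y,z)\in O(L)\}$; it is an autoparatopism of $L$ if $L^\sigma=L$. $\mathrm{Par}(n)$ is the set of paratopisms that are autoparatopisms of at least one Latin square of order $n$. *)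

theory Defs
  imports "HOL-Combinatorics.Permutations"
begin

text \<open>Symbols, rows and columns are indexed by {..<n} (i.e. 0..n-1 instead of 1..n).
A Latin square is a function L with L x y the symbol in row x, column y.\<close>

definition latin_square :: "nat \<Rightarrow> (nat \<Rightarrow> nat \<Rightarrow> nat) \<Rightarrow> bool" where
  "latin_square n L \<longleftrightarrow>
     (\<forall>x<n. \<forall>y<n. L x y < n) \<and>
     (\<forall>x<n. inj_on (\<lambda>y. L x y) {..<n}) \<and>
     (\<forall>y<n. inj_on (\<lambda>x. L x y) {..<n})"

definition triples :: "nat \<Rightarrow> (nat \<Rightarrow> nat \<Rightarrow> nat) \<Rightarrow> (nat \<times> nat \<times> nat) set" where
  "triples n L = {(x, y, L x y) | x y. x < n \<and> y < n}"

text \<open>Image of a triple set under the paratopism (alpha,beta,gamma;(12)):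
  {(y beta, x alpha, z gamma)}; permutations act on the right, so x alpha = alpha x.\<close>
definition par12_image ::
  "(nat \<Rightarrow> nat) \<Rightarrow> (nat \<Rightarrow> nat) \<Rightarrow> (nat \<Rightarrow> nat) \<Rightarrow> (nat \<times> nat \<times> nat) set \<Rightarrow> (nat \<times> nat \<times> nat) set" where
  "par12_image \<alpha> \<beta> \<gamma> T = {(\<beta> y, \<alpha> x, \<gamma> z) | x y z. (x, y, z) \<in> T}"

definition in_Par12 :: "nat \<Rightarrow> (nat \<Rightarrow> nat) \<Rightarrow> (nat \<Rightarrow> nat) \<Rightarrow> (nat \<Rightarrow> nat) \<Rightarrow> bool" where
  "in_Par12 n \<alpha> \<beta> \<gamma> \<longleftrightarrow>
     \<alpha> permutes {..<n} \<and> \<beta> permutes {..<n} \<and> \<gamma> permutes {..<n} \<and>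
     (\<exists>L. latin_square n L \<and> par12_image \<alpha> \<beta> \<gamma> (triples n L) = triples n L)"

definition cycle_of :: "(nat \<Rightarrow> nat) \<Rightarrow> nat \<Rightarrow> nat set" where
  "cycle_of p x = {(p ^^ k) x | k. True}"

definition cycles_of :: "nat \<Rightarrow> (nat \<Rightarrow> nat) \<Rightarrow> nat set set" where
  "cycles_of n p = cycle_of p ` {..<n}"

definition num_odd_cycles :: "nat \<Rightarrow> (nat \<Rightarrow> nat) \<Rightarrow> nat" where
  "num_odd_cycles n p = card {C \<in> cycles_of n p. odd (card C)}"

end

theory Submission
  imports Defs "HOL-Combinatorics.Cycles" "HOL-Combinatorics.Orbits"
begin

(* Let sigma be the permutation (x, y) -> (y beta, x) of the cells. The autoparatopism says
   L (c sigma) = (L c) gamma, and sigma^2 acts as beta on both coordinates.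
   If a sigma-orbit has even length 2j, then beta^j fixes x, so the orbit length is divisible
   by 2^(u+1). If it has odd length, then the beta-cycle of x has odd length a and
   y = x beta^((a-1)/2). The cells whose symbol lies in an odd gamma-cycle Z form a
   sigma-invariant set of n |Z| cells, a number not divisible by 2^(u+1); so one of them lies
   on an odd sigma-orbit. Cells on odd sigma-orbits above the same beta-cycle are joined by a
   power of sigma^2, so their symbols share a gamma-cycle: this gives an injection from the
   odd cycles of gamma into the odd cycles of beta, and for u >= 1 beta has no odd cycles. *)

lemma card_orbit_eq_least_power:
  assumes "permutation p"
  shows "card (orbit p x) = least_power p x"
proof -
  have "orbit p x = set (support p x)"
    using orbit_altdef_permutation[OF assms] support_set[OF assms] by auto
  moreover have "card (set (support p x)) = length (support p x)"
    using cycle_of_permutation[OF assms] by (rule distinct_card)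
  ultimately show ?thesis by simp
qed

lemma orbit_eq_if_mem:
  assumes "permutation p" and "y \<in> orbit p x"
  shows "orbit p y = orbit p x"
  using assms by (simp add: orbit_cyclic_eq3 cyclic_on_orbit')

lemma orbit_subset_if_invariant:
  assumes "p ` S \<subseteq> S" and "x \<in> S"
  shows "orbit p x \<subseteq> S"
proof
  fix y assume "y \<in> orbit p x"
  then show "y \<in> S" by induction (use assms in auto)
qed

lemma dvd_card_if_dvd_least_power:
  assumes "permutation p" and "finite S" and "p ` S \<subseteq> S"
    and "\<And>x. x \<in> S \<Longrightarrow> d dvd least_power p x"
  shows "d dvd card S"
proof -
  have S_eq: "\<Union> (orbit p ` S) = S"
    using orbit_subset_if_invariant[OF assms(3)] permutation_self_in_orbit[OF assms(1)] by blast
  have "d dvd card (\<Union> (orbit p ` S))"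
  proof (rule dvd_partition)
    show "finite (\<Union> (orbit p ` S))" using S_eq assms(2) by simp
    show "\<forall>C\<in>orbit p ` S. d dvd card C"
      using assms(4) by (simp add: card_orbit_eq_least_power[OF assms(1)])
    show "\<forall>C1\<in>orbit p ` S. \<forall>C2\<in>orbit p ` S. C1 \<noteq> C2 \<longrightarrow> C1 \<inter> C2 = {}"
      using orbit_eq_if_mem[OF assms(1)] by blast
  qed
  then show ?thesis using S_eq by simp
qed

lemma cycle_of_eq_orbit:
  assumes "permutation p"
  shows "cycle_of p x = orbit p x"
  using orbit_altdef_permutation[OF assms] by (simp add: cycle_of_def)

lemma card_cycle_of:
  assumes "permutation p"
  shows "card (cycle_of p x) = least_power p x"
  using assms by (simp add: cycle_of_eq_orbit card_orbit_eq_least_power)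

lemma cycle_of_eq_if_mem:
  assumes "permutation p" and "y \<in> cycle_of p x"
  shows "cycle_of p y = cycle_of p x"
  using assms by (simp add: cycle_of_eq_orbit orbit_eq_if_mem)

lemma funpow_in_cycle_of: "(p ^^ k) x \<in> cycle_of p x"
  by (auto simp: cycle_of_def)

lemma self_in_cycle_of: "x \<in> cycle_of p x"
  using funpow_in_cycle_of[where k = 0] by simp

lemma cycle_of_subset_if_permutes:
  assumes "p permutes S" and "x \<in> S"
  shows "cycle_of p x \<subseteq> S"
  using permutes_in_image[OF permutes_funpow[OF assms(1)]] assms(2) by (auto simp: cycle_of_def)

lemma cycle_of_closed:
  assumes "y \<in> cycle_of p x"
  shows "p y \<in> cycle_of p x"
proof -
  obtain k where "y = (p ^^ k) x"
    using assms by (auto simp: cycle_of_def)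
  then show ?thesis
    using funpow_in_cycle_of[of "Suc k" p x] by simp
qed

lemma cycle_of_funpow:
  assumes "permutation p"
  shows "cycle_of p ((p ^^ k) x) = cycle_of p x"
  using cycle_of_eq_if_mem[OF assms funpow_in_cycle_of] .

lemma mod_eq_div2_if_dvd_Suc_double:
  fixes a j :: nat
  assumes "a dvd Suc (2 * j)"
  shows "j mod a = a div 2"
proof -
  obtain m where m: "Suc (2 * j) = a * m" using assms by blast
  then have "odd (a * m)" by (metis even_Suc even_mult_iff even_numeral)
  then have "odd a" "odd m" by simp_all
  then obtain h k where "a = Suc (2 * h)" "m = Suc (2 * k)" by (metis oddE Suc_eq_plus1)
  with m have "j = a * k + h" by (simp add: algebra_simps)
  moreover have "h < a" "a div 2 = h" using \<open>a = Suc (2 * h)\<close> by auto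
  ultimately show ?thesis by simp
qed

lemma card_image_le_card_image_if_factors:
  assumes "finite (g ` A)" and "\<And>a b. a \<in> A \<Longrightarrow> b \<in> A \<Longrightarrow> g a = g b \<Longrightarrow> f a = f b"
  shows "card (f ` A) \<le> card (g ` A)"
proof -
  have "f a = f (inv_into A g (g a))" if "a \<in> A" for a
  proof (rule assms(2)[OF that])
    show "inv_into A g (g a) \<in> A" using that by (simp add: inv_into_into)
    show "g a = g (inv_into A g (g a))" using that by (simp add: f_inv_into_f)
  qed
  then have "f ` A = (f \<circ> inv_into A g) ` (g ` A)"
    unfolding image_comp by (simp cong: image_cong)
  then show ?thesis using card_image_le[OF assms(1)] by metis
qed

lemma latin_square_row_bij:
  assumes "latin_square n L" and "x < n"
  shows "bij_betw (L x) {..<n} {..<n}"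
proof -
  have "inj_on (L x) {..<n}" and "L x ` {..<n} \<subseteq> {..<n}"
    using assms unfolding latin_square_def by auto
  then show ?thesis
    by (simp add: bij_betw_def endo_inj_surj)
qed

lemma card_latin_square_preimage:
  assumes "latin_square n L" and "Z \<subseteq> {..<n}"
  shows "card {c \<in> {..<n} \<times> {..<n}. case_prod L c \<in> Z} = n * card Z"
proof -
  have row: "card {y \<in> {..<n}. L x y \<in> Z} = card Z" if "x < n" for x
  proof -
    have bij: "bij_betw (L x) {..<n} {..<n}"
      using latin_square_row_bij[OF assms(1) that] .
    have "Z \<subseteq> L x ` {..<n}"
      using bij_betw_imp_surj_on[OF bij] assms(2) by simp
    then have "L x ` {y \<in> {..<n}. L x y \<in> Z} = Z"
      by fastforce
    then have "bij_betw (L x) {y \<in> {..<n}. L x y \<in> Z} Z"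
      by (rule bij_betw_subset[OF bij, rotated]) auto
    then show ?thesis by (rule bij_betw_same_card)
  qed
  have "{c \<in> {..<n} \<times> {..<n}. case_prod L c \<in> Z} = (SIGMA x:{..<n}. {y \<in> {..<n}. L x y \<in> Z})"
    by (simp add: set_eq_iff split_paired_All)
  then have "card {c \<in> {..<n} \<times> {..<n}. case_prod L c \<in> Z} = (\<Sum>x<n. card {y \<in> {..<n}. L x y \<in> Z})"
    by simp
  also have "\<dots> = (\<Sum>x<n. card Z)"
    by (rule sum.cong[OF refl], rule row) simp
  finally show ?thesis by simp
qed

locale autoparatopism_12 =
  fixes n :: nat and \<beta> \<gamma> :: "nat \<Rightarrow> nat" and L :: "nat \<Rightarrow> nat \<Rightarrow> nat"
  assumes permutes_beta: "\<beta> permutes {..<n}"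
    and permutes_gamma: "\<gamma> permutes {..<n}"
    and latin: "latin_square n L"
    and autoparatopism: "\<And>x y. x < n \<Longrightarrow> y < n \<Longrightarrow> L (\<beta> y) x = \<gamma> (L x y)"

lemma in_Par12_id_imp_autoparatopism_12:
  assumes "in_Par12 n id \<beta> \<gamma>"
  shows "\<exists>L. autoparatopism_12 n \<beta> \<gamma> L"
proof -
  obtain L where L: "latin_square n L" "par12_image id \<beta> \<gamma> (triples n L) = triples n L"
    and perms: "\<beta> permutes {..<n}" "\<gamma> permutes {..<n}"
    using assms unfolding in_Par12_def by blast
  have "L (\<beta> y) x = \<gamma> (L x y)" if "x < n" "y < n" for x y
  proof -
    have "(x, y, L x y) \<in> triples n L"
      using that unfolding triples_def by blast
    then have "(\<beta> y, x, \<gamma> (L x y)) \<in> par12_image id \<beta> \<gamma> (triples n L)"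
      unfolding par12_image_def by force
    then show ?thesis
      using L(2) by (simp add: triples_def)
  qed
  with L(1) perms show ?thesis by (blast intro: autoparatopism_12.intro)
qed

context autoparatopism_12
begin

abbreviation cells :: "(nat \<times> nat) set" where
  "cells \<equiv> {..<n} \<times> {..<n}"

(* The permutation sigma; it is the identity off the square, so that it has finite support. *)
definition cell_perm :: "nat \<times> nat \<Rightarrow> nat \<times> nat" where
  "cell_perm c = (if c \<in> cells then (\<beta> (snd c), fst c) else c)"

lemma permutation_beta: "permutation \<beta>"
  using permutes_imp_permutation[OF _ permutes_beta] by simp

lemma permutation_gamma: "permutation \<gamma>"
  using permutes_imp_permutation[OF _ permutes_gamma] by simp

lemma beta_less: "x < n \<Longrightarrow> \<beta> x < n"
  using permutes_in_image[OF permutes_beta] by simp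

lemma funpow_beta_less: "x < n \<Longrightarrow> (\<beta> ^^ j) x < n"
  using permutes_in_image[OF permutes_funpow[OF permutes_beta]] by simp

lemma cell_perm_permutes: "cell_perm permutes cells"
proof (rule bij_imp_permutes)
  have inj: "inj_on cell_perm cells"
  proof (rule inj_onI)
    fix c d assume "c \<in> cells" "d \<in> cells" "cell_perm c = cell_perm d"
    then have "\<beta> (snd c) = \<beta> (snd d)" "fst c = fst d"
      by (simp_all add: cell_perm_def)
    then show "c = d"
      using permutes_inj[OF permutes_beta] by (simp add: inj_eq prod_eq_iff)
  qed
  moreover have "cell_perm c \<in> cells" if "c \<in> cells" for c
    using that by (cases c) (simp add: cell_perm_def beta_less)
  ultimately show "bij_betw cell_perm cells cells"
    by (simp add: bij_betw_def endo_inj_surj image_subset_iff)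
  show "cell_perm c = c" if "c \<notin> cells" for c
    using that by (simp add: cell_perm_def)
qed

lemma permutation_cell_perm: "permutation cell_perm"
  using permutes_imp_permutation[OF _ cell_perm_permutes] by simp

lemma cell_perm_funpow_double:
  assumes "x < n" and "y < n"
  shows "(cell_perm ^^ (2 * j)) (x, y) = ((\<beta> ^^ j) x, (\<beta> ^^ j) y)"
proof (induction j)
  case (Suc j)
  then show ?case
    using funpow_beta_less[OF assms(1)] funpow_beta_less[OF assms(2)]
    by (simp add: cell_perm_def beta_less)
qed simp

lemma L_cell_perm:
  assumes "c \<in> cells"
  shows "case_prod L (cell_perm c) = \<gamma> (case_prod L c)"
  using assms by (cases c) (simp add: cell_perm_def autoparatopism)

lemma L_cell_perm_funpow:
  assumes "c \<in> cells"
  shows "case_prod L ((cell_perm ^^ m) c) = (\<gamma> ^^ m) (case_prod L c)"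
proof (induction m)
  case (Suc m)
  have "(cell_perm ^^ m) c \<in> cells"
    using permutes_in_image[OF permutes_funpow[OF cell_perm_permutes]] assms by blast
  with Suc show ?case
    by (simp add: L_cell_perm)
qed simp

lemma even_least_power_cell_perm:
  assumes "(x, y) \<in> cells" and "even (least_power cell_perm (x, y))"
  shows "2 * least_power \<beta> x dvd least_power cell_perm (x, y)"
proof -
  obtain j where j: "least_power cell_perm (x, y) = 2 * j"
    using assms(2) by (rule evenE)
  have "(cell_perm ^^ (2 * j)) (x, y) = (x, y)"
    using least_power_of_permutation(1)[OF permutation_cell_perm, of "(x, y)"] j by simp
  then have "(\<beta> ^^ j) x = x"
    using assms(1) by (simp add: cell_perm_funpow_double)
  then have "least_power \<beta> x dvd j"
    by (simp add: least_power_dvd[OF permutation_beta])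
  then show ?thesis
    using j by simp
qed

lemma odd_least_power_cell_perm:
  assumes "(x, y) \<in> cells" and "odd (least_power cell_perm (x, y))"
  shows "odd (least_power \<beta> x) \<and> y = (\<beta> ^^ (least_power \<beta> x div 2)) x"
proof -
  obtain j where "least_power cell_perm (x, y) = 2 * j + 1"
    using assms(2) by (rule oddE)
  then have j: "least_power cell_perm (x, y) = Suc (2 * j)"
    by simp
  have "(x, y) = (cell_perm ^^ Suc (2 * j)) (x, y)"
    using least_power_of_permutation(1)[OF permutation_cell_perm, of "(x, y)"] j by simp
  also have "\<dots> = (\<beta> ((\<beta> ^^ j) y), (\<beta> ^^ j) x)"
    using assms(1) funpow_beta_less by (simp add: cell_perm_funpow_double cell_perm_def)
  finally have xy: "(x, y) = (\<beta> ((\<beta> ^^ j) y), (\<beta> ^^ j) x)" .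
  have y_eq: "y = (\<beta> ^^ j) x"
    using arg_cong[OF xy, of snd] by simp
  have x_eq: "x = \<beta> ((\<beta> ^^ j) y)"
    using arg_cong[OF xy, of fst] by simp
  have "(\<beta> ^^ Suc (2 * j)) x = \<beta> ((\<beta> ^^ j) ((\<beta> ^^ j) x))"
    by (simp add: mult_2 funpow_add)
  also have "\<dots> = x"
    by (simp only: y_eq[symmetric] x_eq[symmetric])
  finally have "(\<beta> ^^ Suc (2 * j)) x = x" .
  then have dvd: "least_power \<beta> x dvd Suc (2 * j)"
    by (simp add: least_power_dvd[OF permutation_beta])
  have "odd (least_power \<beta> x)"
  proof
    assume "even (least_power \<beta> x)"
    then have "even (Suc (2 * j))" using dvd by (rule dvd_trans)
    then show False by simp
  qed
  moreover have "y = (\<beta> ^^ (j mod least_power \<beta> x)) x"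
    unfolding y_eq by (rule funpow_mod_eq[OF least_power_of_permutation(1)[OF permutation_beta], symmetric])
  ultimately show ?thesis
    using mod_eq_div2_if_dvd_Suc_double[OF dvd] by simp
qed

lemma cycle_of_gamma_eq_if_odd:
  assumes c1: "(x1, y1) \<in> cells" "odd (least_power cell_perm (x1, y1))"
    and c2: "(x2, y2) \<in> cells" "odd (least_power cell_perm (x2, y2))"
    and same_cycle: "cycle_of \<beta> x1 = cycle_of \<beta> x2"
  shows "cycle_of \<gamma> (L x1 y1) = cycle_of \<gamma> (L x2 y2)"
proof -
  obtain s where s: "x2 = (\<beta> ^^ s) x1"
    using same_cycle self_in_cycle_of[of x2 \<beta>] by (auto simp: cycle_of_def)
  define h where "h = least_power \<beta> x1 div 2"
  have "least_power \<beta> x2 = least_power \<beta> x1"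
    using same_cycle by (simp add: card_cycle_of[OF permutation_beta, symmetric])
  then have "y2 = (\<beta> ^^ h) ((\<beta> ^^ s) x1)"
    using odd_least_power_cell_perm[OF c2] s by (simp add: h_def)
  also have "\<dots> = (\<beta> ^^ (h + s)) x1"
    by (simp add: funpow_add)
  also have "\<dots> = (\<beta> ^^ (s + h)) x1"
    by (simp only: add.commute)
  also have "\<dots> = (\<beta> ^^ s) ((\<beta> ^^ h) x1)"
    by (simp add: funpow_add)
  also have "\<dots> = (\<beta> ^^ s) y1"
    using odd_least_power_cell_perm[OF c1] by (simp add: h_def)
  finally have "(cell_perm ^^ (2 * s)) (x1, y1) = (x2, y2)"
    using s c1(1) by (simp add: cell_perm_funpow_double)
  then have "L x2 y2 = (\<gamma> ^^ (2 * s)) (L x1 y1)"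
    using L_cell_perm_funpow[OF c1(1), of "2 * s"] by simp
  then show ?thesis
    by (simp add: cycle_of_funpow[OF permutation_gamma])
qed

lemma ex_odd_orbit_cell_over_odd_cycle:
  assumes beta_dvd: "\<forall>x<n. 2 ^ u dvd least_power \<beta> x" and "\<not> 2 ^ Suc u dvd n"
    and "z < n" and odd_z: "odd (least_power \<gamma> z)"
  shows "\<exists>c\<in>cells. odd (least_power cell_perm c) \<and> case_prod L c \<in> cycle_of \<gamma> z"
proof (rule ccontr)
  assume no_odd: "\<not> ?thesis"
  define S where "S = {c \<in> cells. case_prod L c \<in> cycle_of \<gamma> z}"
  have "cell_perm c \<in> S" if "c \<in> S" for c
  proof -
    have "c \<in> cells" and "case_prod L c \<in> cycle_of \<gamma> z"
      using that by (simp_all add: S_def)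
    then show ?thesis
      using permutes_in_image[OF cell_perm_permutes] by (simp add: S_def L_cell_perm cycle_of_closed)
  qed
  then have "cell_perm ` S \<subseteq> S"
    by blast
  moreover have "2 ^ Suc u dvd least_power cell_perm c" if "c \<in> S" for c
  proof -
    obtain x y where c: "c = (x, y)" "x < n" "y < n"
      using \<open>c \<in> S\<close> by (auto simp: S_def)
    have "2 * 2 ^ u dvd 2 * least_power \<beta> x"
      using beta_dvd c(2) by simp
    moreover have "2 * least_power \<beta> x dvd least_power cell_perm c"
      using no_odd \<open>c \<in> S\<close> c even_least_power_cell_perm by (auto simp: S_def)
    ultimately show ?thesis
      unfolding power_Suc by (rule dvd_trans)
  qed
  ultimately have "2 ^ Suc u dvd card S"
    by (intro dvd_card_if_dvd_least_power[OF permutation_cell_perm]) (simp_all add: S_def)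
  moreover have "card S = n * least_power \<gamma> z"
    using card_latin_square_preimage[OF latin cycle_of_subset_if_permutes[OF permutes_gamma]] \<open>z < n\<close>
    by (simp add: S_def card_cycle_of[OF permutation_gamma])
  ultimately have "2 ^ Suc u dvd n"
    using odd_z by (simp add: coprime_dvd_mult_left_iff)
  with assms(2) show False ..
qed

lemma num_odd_cycles_gamma_le_beta:
  assumes "\<forall>x<n. 2 ^ u dvd least_power \<beta> x" and "\<not> 2 ^ Suc u dvd n"
  shows "num_odd_cycles n \<gamma> \<le> num_odd_cycles n \<beta>"
proof -
  define D where "D = {c \<in> cells. odd (least_power cell_perm c)}"
  define gamma_cycle where "gamma_cycle c = cycle_of \<gamma> (case_prod L c)" for c
  define beta_cycle where "beta_cycle c = cycle_of \<beta> (fst c)" for c :: "nat \<times> nat"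
  have finite_D: "finite D"
    by (simp add: D_def)
  have "{C \<in> cycles_of n \<gamma>. odd (card C)} \<subseteq> gamma_cycle ` D"
  proof
    fix Z assume "Z \<in> {C \<in> cycles_of n \<gamma>. odd (card C)}"
    then obtain z where z: "z < n" "Z = cycle_of \<gamma> z" "odd (least_power \<gamma> z)"
      by (auto simp: cycles_of_def card_cycle_of[OF permutation_gamma])
    then obtain c where c: "c \<in> D" "case_prod L c \<in> Z"
      using ex_odd_orbit_cell_over_odd_cycle[OF assms z(1,3)] unfolding D_def by blast
    then have "Z = gamma_cycle c"
      using z(2) cycle_of_eq_if_mem[OF permutation_gamma] by (simp add: gamma_cycle_def)
    with c(1) show "Z \<in> gamma_cycle ` D"
      by blast
  qed
  then have "num_odd_cycles n \<gamma> \<le> card (gamma_cycle ` D)"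
    unfolding num_odd_cycles_def using finite_D by (simp add: card_mono)
  also have "\<dots> \<le> card (beta_cycle ` D)"
  proof (rule card_image_le_card_image_if_factors)
    show "finite (beta_cycle ` D)"
      using finite_D by simp
    show "gamma_cycle a = gamma_cycle b" if "a \<in> D" "b \<in> D" "beta_cycle a = beta_cycle b" for a b
    proof -
      obtain x1 y1 x2 y2 where ab: "a = (x1, y1)" "b = (x2, y2)"
        by fastforce
      show ?thesis
        using that cycle_of_gamma_eq_if_odd[of x1 y1 x2 y2] unfolding ab
        by (simp add: D_def gamma_cycle_def beta_cycle_def)
    qed
  qed
  also have "\<dots> \<le> num_odd_cycles n \<beta>"
  proof -
    have "beta_cycle c \<in> {C \<in> cycles_of n \<beta>. odd (card C)}" if "c \<in> D" for c
    proof -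
      obtain x y where c: "c = (x, y)"
        by fastforce
      have "x < n" and "odd (least_power \<beta> x)"
        using that odd_least_power_cell_perm[of x y] unfolding c by (simp_all add: D_def)
      then show ?thesis
        by (simp add: c beta_cycle_def cycles_of_def card_cycle_of[OF permutation_beta])
    qed
    then have "beta_cycle ` D \<subseteq> {C \<in> cycles_of n \<beta>. odd (card C)}"
      by blast
    then show ?thesis
      unfolding num_odd_cycles_def by (simp add: card_mono cycles_of_def)
  qed
  finally show ?thesis .
qed

end

theorem theorem4p6:
  fixes n u v :: nat and \<beta> \<gamma> :: "nat \<Rightarrow> nat"
  assumes "n = 2 ^ u * v" and "odd v"
    and "in_Par12 n id \<beta> \<gamma>"
    and "\<forall>C \<in> cycles_of n \<beta>. 2 ^ u dvd card C"
  shows "num_odd_cycles n \<beta> \<ge> num_odd_cycles n \<gamma>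
         \<and> (u \<ge> 1 \<longrightarrow> num_odd_cycles n \<gamma> = 0)"
proof -
  obtain L where "autoparatopism_12 n \<beta> \<gamma> L"
    using in_Par12_id_imp_autoparatopism_12[OF assms(3)] ..
  then interpret autoparatopism_12 n \<beta> \<gamma> L .
  have beta_dvd: "\<forall>x<n. 2 ^ u dvd least_power \<beta> x"
    using assms(4) by (simp add: cycles_of_def card_cycle_of[OF permutation_beta])
  have "\<not> 2 ^ Suc u dvd n"
    using assms(1,2) by simp
  with beta_dvd have "num_odd_cycles n \<gamma> \<le> num_odd_cycles n \<beta>"
    by (rule num_odd_cycles_gamma_le_beta)
  moreover have "num_odd_cycles n \<beta> = 0" if "u \<ge> 1"
  proof -
    have "even (card C)" if "C \<in> cycles_of n \<beta>" for C
      using assms(4) that \<open>u \<ge> 1\<close> dvd_trans[OF dvd_power[of u 2]] by auto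
    then have "{C \<in> cycles_of n \<beta>. odd (card C)} = {}"
      by blast
    then show ?thesis
      by (simp only: num_odd_cycles_def card.empty)
  qed
  ultimately show ?thesis
    by auto
qed

end
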